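(* Fix an integer $k\ge2$ and $\delta\in(0,2)$. Let $\mathcal R_n(1),\dots,\mathcal R_n(k)$ be independent random sets, each distributed as $\mathcal S_{n,1}(1)$. Then, uniformly over $\bar J\in\mathcal B_{n,k,\delta}$, \[\mathbb P\big(\mathcal S_{n,1}(i)=J_i,\ i\in[k]\big)=(1+o(1))\,\mathbb P\big(\mathcal R_n(i)=J_i,\ i\in[k]\big)\quad\text{as }n\to\infty.\]
   Context: Kingman's $n$-coalescent $(F_n,\dots,F_1)$: forests on $[n]$; $F_n$ has no edges; for $2\le i\le n$, list the trees of $F_i$ as $T^{(i)}_1,\dots,T^{(i)}_i$ in increasing order of smallest label, choose $\{a_i,b_i\}$ uniformly among 2-subsets of $[i]$ and an independent fair bit $\xi_i$ (independent over $i$), and obtain $F_{i-1}$ by joining the roots of $T^{(i)}_{a_i},T^{(i)}_{b_i}$ by an edge directed according to $\xi_i$. $T_i(v)$ is the tree of $F_i$ containing $v$; $\mathcal S_n(v)=\{2\le i\le n:T_i(v)\in\{T^{(i)}_{a_i},T^{(i)}_{b_i}\}\}$; $\mathcal S_{n,1}(v)=\mathcal S_n(v)\setminus[\lfloor\ln^2 n\rfloor]$ (so $\mathcal S_{n,1}(1)$ contains each $m\in\{\lfloor\ln^2 n\rfloor+1,\dots,n\}$ independently with probability $2/m$). $\Omega_1$ is the power set of $\{\lfloor\ln^2 n\rfloor+1,\dots,n\}$, and for $\delta\in(0,2)$, $\mathcal B_{n,k,\delta}$ is the set of $\bar J=(J_1,\dots,J_k)\in\Omega_1^k$ with $J_1,\dots,J_k$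 pairwise disjoint and $||J_i|-2\ln n|\le\delta\ln n$ for all $i\in[k]$. *)

theory Defs
  imports "HOL-Probability.Probability"
begin

text \<open>Forests are represented by their vertex partitions (the set of vertex sets of their
trees); the sets S_n(v) only depend on which trees are merged.  The choice at step i is a
pair (2-subset of [i], fair bit).\<close>

definition block :: "nat set set \<Rightarrow> nat \<Rightarrow> nat set" where
  "block P j = (THE B. B \<in> P \<and> Min B = sorted_list_of_set (Min ` P) ! (j - 1))"

definition merge :: "nat set set \<Rightarrow> nat set \<Rightarrow> nat set set" where
  "merge P A = (P - block P ` A) \<union> {\<Union> (block P ` A)}"

fun coal :: "nat \<Rightarrow> (nat \<Rightarrow> nat set \<times> bool) \<Rightarrow> nat \<Rightarrow> nat set set" where
  "coal n c 0 = (\<lambda>v. {v}) ` {1..n}"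
| "coal n c (Suc d) = merge (coal n c d) (fst (c (n - d)))"

definition forest :: "nat \<Rightarrow> (nat \<Rightarrow> nat set \<times> bool) \<Rightarrow> nat \<Rightarrow> nat set set" where
  "forest n c i = coal n c (n - i)"

definition tree_of :: "nat set set \<Rightarrow> nat \<Rightarrow> nat set" where
  "tree_of P v = (THE B. B \<in> P \<and> v \<in> B)"

definition Sset :: "nat \<Rightarrow> (nat \<Rightarrow> nat set \<times> bool) \<Rightarrow> nat \<Rightarrow> nat set" where
  "Sset n c v = {i \<in> {2..n}. tree_of (forest n c i) v \<in> block (forest n c i) ` fst (c i)}"

definition Lcut :: "nat \<Rightarrow> nat" where
  "Lcut n = nat \<lfloor>(ln (real n))\<^sup>2\<rfloor>"

definition Sset1 :: "nat \<Rightarrow> (nat \<Rightarrow> nat set \<times> bool) \<Rightarrow> nat \<Rightarrow> nat set" where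
  "Sset1 n c v = Sset n c v - {1..Lcut n}"

definition choices :: "nat \<Rightarrow> (nat \<Rightarrow> nat set \<times> bool) set" where
  "choices n = (\<Pi>\<^sub>E i\<in>{2..n}. {A. A \<subseteq> {1..i} \<and> card A = 2} \<times> (UNIV :: bool set))"

definition coal_pmf :: "nat \<Rightarrow> (nat \<Rightarrow> nat set \<times> bool) pmf" where
  "coal_pmf n = pmf_of_set (choices n)"

definition Omega1 :: "nat \<Rightarrow> nat set set" where
  "Omega1 n = Pow {Lcut n + 1..n}"

definition Bset :: "nat \<Rightarrow> nat \<Rightarrow> real \<Rightarrow> (nat \<Rightarrow> nat set) set" where
  "Bset n k \<delta> = {J. (\<forall>i\<in>{1..k}. J i \<in> Omega1 n)
      \<and> (\<forall>i\<in>{1..k}. \<forall>j\<in>{1..k}. i \<noteq> j \<longrightarrow> J i \<inter> J j = {})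
      \<and> (\<forall>i\<in>{1..k}. \<bar>real (card (J i)) - 2 * ln (real n)\<bar> \<le> \<delta> * ln (real n))}"

definition PS :: "nat \<Rightarrow> nat \<Rightarrow> (nat \<Rightarrow> nat set) \<Rightarrow> real" where
  "PS n k J = measure_pmf.prob (coal_pmf n) {c. \<forall>i\<in>{1..k}. Sset1 n c i = J i}"

text \<open>P(R_n(i) = J_i, i \<in> [k]) for independent R_n(i) each distributed as S_{n,1}(1).\<close>
definition PR :: "nat \<Rightarrow> nat \<Rightarrow> (nat \<Rightarrow> nat set) \<Rightarrow> real" where
  "PR n k J = (\<Prod>i\<in>{1..k}. measure_pmf.prob (coal_pmf n) {c. Sset1 n c 1 = J i})"

end

theory Submission
  imports Defs "HOL-Real_Asymp.Real_Asymp"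
begin

text \<open>Prescribe, for each vertex \<open>i \<le> k\<close>, the set \<open>J i\<close> of steps \<open>m > \<lfloor>ln\<^sup>2 n\<rfloor>\<close> at which
  the tree of \<open>i\<close> is merged. As long as the history is consistent with this prescription, the
  vertices \<open>1, \<dots>, k\<close> lie in \<open>k\<close> distinct trees, because merging two of them would put one
  step into two of the disjoint sets \<open>J i\<close>. Hence the number of consistent choices at step \<open>m\<close>
  depends only on \<open>m\<close> and on whether \<open>m \<in> J i\<close> for some \<open>i\<close>, and the joint probability is
  an explicit product of factors over \<open>m\<close>; the law of \<open>S\<^sub>n\<^sub>,\<^sub>1(1)\<close> is the case \<open>k = 1\<close>.
  Factor by factor, the joint law and the product of the \<open>k\<close> single-vertex laws agree up to a
  ratio within \<open>exp(\<plusminus>4k/m)\<close> at the \<open>O(k ln n)\<close> prescribed steps and within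
  \<open>exp(\<plusminus>8k\<^sup>2/m\<^sup>2)\<close> elsewhere; as \<open>m > ln\<^sup>2 n\<close>, the accumulated error is \<open>O(k\<^sup>2/ln n)\<close>.\<close>

definition vertex_partition :: "nat \<Rightarrow> nat set set \<Rightarrow> bool" where
  "vertex_partition n P \<longleftrightarrow> finite P \<and> {} \<notin> P \<and> disjoint P \<and> \<Union>P = {1..n}"

lemma vertex_partition_finite_block: "vertex_partition n P \<Longrightarrow> B \<in> P \<Longrightarrow> finite B"
  unfolding vertex_partition_def by (metis Union_upper finite_atLeastAtMost finite_subset)

lemma vertex_partition_inj_on_Min:
  assumes "vertex_partition n P" shows "inj_on Min P"
proof
  fix B C assume B: "B \<in> P" and C: "C \<in> P" and eq: "Min B = Min C"
  have "B \<noteq> {}" "C \<noteq> {}" using assms B C unfolding vertex_partition_def by auto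
  then have "Min B \<in> B" "Min C \<in> C"
    using Min_in vertex_partition_finite_block[OF assms] B C by blast+
  then have "Min B \<in> B \<inter> C" using eq by simp
  then show "B = C" using disjointD[of P B C] assms B C unfolding vertex_partition_def by blast
qed

lemma block_characterization:
  assumes "vertex_partition n P" "j \<in> {1..card P}"
  shows "block P j \<in> P \<and> Min (block P j) = sorted_list_of_set (Min ` P) ! (j - 1)"
proof -
  let ?xs = "sorted_list_of_set (Min ` P)"
  have fin: "finite P" using assms unfolding vertex_partition_def by blast
  have "length ?xs = card P"
    using vertex_partition_inj_on_Min[OF assms(1)] fin by (simp add: card_image)
  then have "j - 1 < length ?xs" using assms(2) by auto
  then have "?xs ! (j - 1) \<in> Min ` P" using fin by (metis nth_mem sorted_list_of_set.set_sorted_key_list_of_set finite_imageI)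
  then obtain B where B: "B \<in> P" "Min B = ?xs ! (j - 1)" by (metis imageE)
  have "\<exists>!B. B \<in> P \<and> Min B = ?xs ! (j - 1)"
    using B vertex_partition_inj_on_Min[OF assms(1)] by (metis inj_onD)
  then show ?thesis unfolding block_def by (rule theI')
qed

lemma bij_betw_block:
  assumes "vertex_partition n P" shows "bij_betw (block P) {1..card P} P"
proof -
  let ?xs = "sorted_list_of_set (Min ` P)"
  have fin: "finite P" using assms unfolding vertex_partition_def by blast
  have len: "length ?xs = card P"
    using vertex_partition_inj_on_Min[OF assms] fin by (simp add: card_image)
  have inj: "inj_on (block P) {1..card P}"
  proof
    fix i j assume ij: "i \<in> {1..card P}" "j \<in> {1..card P}" "block P i = block P j"
    then have "?xs ! (i - 1) = ?xs ! (j - 1)" using block_characterization[OF assms] by metis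
    moreover have "i - 1 < length ?xs" "j - 1 < length ?xs" using len ij(1,2) by auto
    ultimately have "i - 1 = j - 1" using nth_eq_iff_index_eq distinct_sorted_list_of_set by blast
    then show "i = j" using ij by auto
  qed
  have "block P ` {1..card P} \<subseteq> P" using block_characterization[OF assms] by blast
  moreover have "card (block P ` {1..card P}) = card P" using inj by (simp add: card_image)
  ultimately show ?thesis using inj fin by (simp add: bij_betw_def card_subset_eq)
qed

lemma vertex_partition_ex1_block:
  assumes "vertex_partition n P" "v \<in> {1..n}" shows "\<exists>!B. B \<in> P \<and> v \<in> B"
proof -
  have "v \<in> \<Union>P" using assms unfolding vertex_partition_def by simp
  then obtain B where "B \<in> P" "v \<in> B" by blast
  moreover have "C = B" if "C \<in> P" "v \<in> C" for C
    using that \<open>B \<in> P\<close> \<open>v \<in> B\<close> assms(1) disjointD[of P C B]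
    unfolding vertex_partition_def by blast
  ultimately show ?thesis by blast
qed

lemma tree_of_in:
  assumes "vertex_partition n P" "v \<in> {1..n}"
  shows "tree_of P v \<in> P" and "v \<in> tree_of P v"
  using theI'[OF vertex_partition_ex1_block[OF assms]] unfolding tree_of_def by auto

lemma tree_of_eqI:
  assumes "vertex_partition n P" "B \<in> P" "v \<in> B" shows "tree_of P v = B"
proof -
  have "v \<in> {1..n}" using assms unfolding vertex_partition_def by blast
  then have "\<exists>!B. B \<in> P \<and> v \<in> B" using vertex_partition_ex1_block assms(1) by blast
  then show ?thesis unfolding tree_of_def by (rule the1_equality) (use assms in blast)
qed

lemma disjoint_merge_two:
  assumes dj: "disjoint P" and B12: "B1 \<in> P" "B2 \<in> P"
  shows "disjoint (P - {B1, B2} \<union> {B1 \<union> B2})"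
proof (rule disjointI)
  fix B C assume "B \<in> P - {B1, B2} \<union> {B1 \<union> B2}" "C \<in> P - {B1, B2} \<union> {B1 \<union> B2}" "B \<noteq> C"
  then consider "B \<in> P - {B1, B2}" "C \<in> P - {B1, B2}" | "B = B1 \<union> B2" "C \<in> P - {B1, B2}"
    | "B \<in> P - {B1, B2}" "C = B1 \<union> B2" by blast
  then show "B \<inter> C = {}"
  proof cases
    case 1
    then show ?thesis using disjointD[OF dj, of B C] \<open>B \<noteq> C\<close> by blast
  next
    case 2
    then show ?thesis using disjointD[OF dj, of C B1] disjointD[OF dj, of C B2] B12 by blast
  next
    case 3
    then show ?thesis using disjointD[OF dj, of B B1] disjointD[OF dj, of B B2] B12 by blast
  qed
qed

lemma merge_eq_two_blocks:
  assumes "vertex_partition n P" "A \<subseteq> {1..card P}" "card A = 2"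
  obtains B1 B2 where "block P ` A = {B1, B2}" "B1 \<in> P" "B2 \<in> P" "B1 \<noteq> B2"
    "merge P A = (P - {B1, B2}) \<union> {B1 \<union> B2}"
proof -
  obtain a b where ab: "A = {a, b}" "a \<noteq> b" using assms(3) by (meson card_2_iff)
  have "a \<in> {1..card P}" "b \<in> {1..card P}" using ab assms(2) by auto
  then have "block P a \<in> P" "block P b \<in> P" "block P a \<noteq> block P b"
    using bij_betw_apply[OF bij_betw_block[OF assms(1)]] bij_betw_imp_inj_on[OF bij_betw_block[OF assms(1)]]
      ab(2) by (auto dest: inj_onD)
  with that[of "block P a" "block P b"] show thesis by (simp add: merge_def ab)
qed

lemma
  assumes P: "vertex_partition n P" and A: "A \<subseteq> {1..card P}" "card A = 2"
  shows vertex_partition_merge: "vertex_partition n (merge P A)"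
    and card_merge: "card (merge P A) = card P - 1"
    and tree_of_merge: "v \<in> {1..n} \<Longrightarrow> tree_of (merge P A) v =
      (if tree_of P v \<in> block P ` A then \<Union>(block P ` A) else tree_of P v)"
proof -
  obtain B1 B2 where img: "block P ` A = {B1, B2}" and B12: "B1 \<in> P" "B2 \<in> P" "B1 \<noteq> B2"
    and M: "merge P A = (P - {B1, B2}) \<union> {B1 \<union> B2}"
    using merge_eq_two_blocks[OF P A] .
  have fin: "finite P" and ne: "{} \<notin> P" and dj: "disjoint P" and un: "\<Union>P = {1..n}"
    using P unfolding vertex_partition_def by blast+
  have "B1 \<union> B2 = B" if "B1 \<union> B2 \<in> P" "B \<in> {B1, B2}" for B
  proof (rule ccontr)
    assume "B1 \<union> B2 \<noteq> B"
    moreover have "B \<in> P" using that(2) B12 by blast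
    ultimately have "(B1 \<union> B2) \<inter> B = {}" using disjointD[OF dj that(1)] by blast
    then show False using that(2) B12 ne by auto
  qed
  then have notin: "B1 \<union> B2 \<notin> P" using B12(3) by blast
  have dj': "disjoint (P - {B1, B2} \<union> {B1 \<union> B2})" using disjoint_merge_two[OF dj B12(1,2)] .
  have "B1 \<union> B2 \<noteq> {}" using B12 ne by auto
  moreover have "\<Union>(P - {B1, B2} \<union> {B1 \<union> B2}) = \<Union>P" using B12 by auto
  ultimately show w: "vertex_partition n (merge P A)"
    unfolding vertex_partition_def M using fin ne dj' un by simp
  have "card P \<ge> 2" using B12 card_mono[OF fin, of "{B1, B2}"] by auto
  then show "card (merge P A) = card P - 1"
    unfolding M using notin fin B12 by (simp add: card_Diff_subset)
  assume v: "v \<in> {1..n}"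
  show "tree_of (merge P A) v = (if tree_of P v \<in> block P ` A then \<Union>(block P ` A) else tree_of P v)"
    using tree_of_eqI[OF w, of "B1 \<union> B2" v] tree_of_eqI[OF w, of "tree_of P v" v]
      tree_of_in[OF P v] img M by auto
qed

lemma Union_merged_blocks_notin:
  assumes "vertex_partition n P" "A \<subseteq> {1..card P}" "card A = 2" "B \<in> P" "B \<notin> block P ` A"
  shows "B \<noteq> \<Union>(block P ` A)"
proof
  assume eq: "B = \<Union>(block P ` A)"
  obtain a where a: "a \<in> A" using assms(3) by fastforce
  have "block P a \<in> P" using bij_betw_block[OF assms(1)] a assms(2) unfolding bij_betw_def by auto
  moreover have "block P a \<noteq> B" using assms(5) a by auto
  moreover have "disjoint P" "{} \<notin> P" using assms(1) unfolding vertex_partition_def by blast+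
  ultimately have "block P a \<inter> B = {}" "block P a \<noteq> {}"
    using disjointD[of P "block P a" B] assms(4) by auto
  moreover have "block P a \<subseteq> B" using eq a by auto
  ultimately show False by auto
qed

lemma tree_of_merge_neq:
  assumes P: "vertex_partition n P" and A: "A \<subseteq> {1..card P}" "card A = 2"
    and ij: "i \<in> {1..n}" "j \<in> {1..n}" "tree_of P i \<noteq> tree_of P j"
    and not_both: "\<not> (tree_of P i \<in> block P ` A \<and> tree_of P j \<in> block P ` A)"
  shows "tree_of (merge P A) i \<noteq> tree_of (merge P A) j"
proof -
  have notU: "tree_of P v \<noteq> \<Union>(block P ` A)" if "v \<in> {1..n}" "tree_of P v \<notin> block P ` A" for v
    using Union_merged_blocks_notin[OF P A tree_of_in(1)[OF P that(1)] that(2)] .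
  show ?thesis
  proof (cases "tree_of P i \<in> block P ` A")
    case True
    then have "tree_of P j \<notin> block P ` A" using not_both by blast
    then show ?thesis using True not_sym[OF notU[OF ij(2)]]
      by (simp add: tree_of_merge[OF P A ij(1)] tree_of_merge[OF P A ij(2)])
  next
    case False
    then show ?thesis using ij(3) notU[OF ij(1)]
      by (simp add: tree_of_merge[OF P A ij(1)] tree_of_merge[OF P A ij(2)])
  qed
qed

definition valid_merges :: "nat \<Rightarrow> nat \<Rightarrow> (nat \<Rightarrow> nat set \<times> bool) \<Rightarrow> bool" where
  "valid_merges n d c \<longleftrightarrow> (\<forall>j. n - d < j \<and> j \<le> n \<longrightarrow> fst (c j) \<subseteq> {1..j} \<and> card (fst (c j)) = 2)"

lemma vertex_partition_coal:
  "d < n \<Longrightarrow> valid_merges n d c \<Longrightarrow> vertex_partition n (coal n c d) \<and> card (coal n c d) = n - d"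
proof (induction d)
  case 0
  have "vertex_partition n ((\<lambda>v. {v}) ` {1..n})"
    unfolding vertex_partition_def disjoint_def by (auto simp: pairwise_def)
  then show ?case by (simp add: card_image)
next
  case (Suc d)
  have "n - Suc d \<le> n - d" by simp
  then have "valid_merges n d c" using Suc.prems(2) unfolding valid_merges_def by (meson le_less_trans)
  then have IH: "vertex_partition n (coal n c d)" "card (coal n c d) = n - d" using Suc by auto
  have "fst (c (n - d)) \<subseteq> {1..n-d}" "card (fst (c (n - d))) = 2"
    using Suc.prems unfolding valid_merges_def by auto
  then show ?case using vertex_partition_merge[OF IH(1)] card_merge[OF IH(1)] IH(2) by simp
qed

lemma coal_cong:
  "d \<le> n \<Longrightarrow> (\<And>j. n - d < j \<Longrightarrow> j \<le> n \<Longrightarrow> c j = c' j) \<Longrightarrow> coal n c d = coal n c' d"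
proof (induction d)
  case (Suc d)
  then have "coal n c d = coal n c' d" by simp
  moreover have "c (n - d) = c' (n - d)" using Suc.prems by (cases "d < n") auto
  ultimately show ?case by simp
qed simp

lemma forest_cong:
  "m \<le> n \<Longrightarrow> (\<And>j. m < j \<Longrightarrow> j \<le> n \<Longrightarrow> c j = c' j) \<Longrightarrow> forest n c m = forest n c' m"
  unfolding forest_def by (rule coal_cong) auto

lemma card_2subsets_avoiding_image:
  assumes "finite S" "inj_on t I" "t ` I \<subseteq> S"
  shows "card {A. A \<subseteq> S \<and> card A = 2 \<and> (\<forall>i\<in>I. t i \<notin> A)} = (card S - card I) choose 2"
proof -
  have "{A. A \<subseteq> S \<and> card A = 2 \<and> (\<forall>i\<in>I. t i \<notin> A)} = {A. A \<subseteq> S - t ` I \<and> card A = 2}" by auto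
  moreover have "card (S - t ` I) = card S - card I"
    using assms by (metis card_Diff_subset card_image finite_subset)
  ultimately show ?thesis using n_subsets[of "S - t ` I" 2] assms(1) by simp
qed

lemma card_2subsets_meeting_image_once:
  assumes "finite S" "inj_on t I" "t ` I \<subseteq> S" "i0 \<in> I"
  shows "card {A. A \<subseteq> S \<and> card A = 2 \<and> (\<forall>i\<in>I. t i \<in> A \<longleftrightarrow> i = i0)} = card S - card I"
proof -
  let ?c = "t i0"
  have c: "?c \<in> t ` I" using assms(4) by blast
  have "{A. A \<subseteq> S \<and> card A = 2 \<and> (\<forall>i\<in>I. t i \<in> A \<longleftrightarrow> i = i0)} = (\<lambda>x. {?c, x}) ` (S - t ` I)"
  proof (intro equalityI subsetI)
    fix A assume "A \<in> {A. A \<subseteq> S \<and> card A = 2 \<and> (\<forall>i\<in>I. t i \<in> A \<longleftrightarrow> i = i0)}"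
    then have A: "A \<subseteq> S" "card A = 2" "\<And>i. i \<in> I \<Longrightarrow> t i \<in> A \<longleftrightarrow> i = i0" by auto
    have "?c \<in> A" using A(3) assms(4) by blast
    then have "card (A - {?c}) = 1" using A(2) by (simp add: card_Diff_singleton_if)
    then obtain x where "A - {?c} = {x}" by (rule card_1_singletonE)
    then have x: "A = {?c, x}" "x \<noteq> ?c" using \<open>?c \<in> A\<close> by auto
    have "x \<notin> t ` I"
    proof
      assume "x \<in> t ` I"
      then obtain i where "i \<in> I" "x = t i" by blast
      then show False using A(3)[of i] x by auto
    qed
    then show "A \<in> (\<lambda>x. {?c, x}) ` (S - t ` I)" using x A(1) by blast
  next
    fix A assume "A \<in> (\<lambda>x. {?c, x}) ` (S - t ` I)"
    then obtain x where x: "x \<in> S" "x \<notin> t ` I" "A = {?c, x}" by auto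
    have "x \<noteq> ?c" using x c by auto
    moreover have "t i \<in> A \<longleftrightarrow> i = i0" if "i \<in> I" for i
      using that x assms(2,4) by (auto dest: inj_onD)
    ultimately show "A \<in> {A. A \<subseteq> S \<and> card A = 2 \<and> (\<forall>i\<in>I. t i \<in> A \<longleftrightarrow> i = i0)}"
      using x assms(3,4) by auto
  qed
  moreover have "inj_on (\<lambda>x. {?c, x}) (S - t ` I)"
    using c by (auto simp: inj_on_def doubleton_eq_iff)
  moreover have "card (S - t ` I) = card S - card I"
    using assms(1-3) by (metis card_Diff_subset card_image finite_subset)
  ultimately show ?thesis by (simp add: card_image)
qed

definition merge_choices :: "nat \<Rightarrow> (nat set \<times> bool) set" where
  "merge_choices m = {A. A \<subseteq> {1..m} \<and> card A = 2} \<times> UNIV"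

lemma choices_eq_PiE: "choices n = PiE {2..n} merge_choices"
  unfolding choices_def merge_choices_def by simp

lemma card_merge_choices: "card (merge_choices m) = 2 * (m choose 2)"
  unfolding merge_choices_def using n_subsets[of "{1..m}" 2] by (simp add: card_cartesian_product)

lemma finite_merge_choices: "finite (merge_choices m)"
  unfolding merge_choices_def by simp

definition consistent_at :: "nat \<Rightarrow> nat \<Rightarrow> (nat \<Rightarrow> nat set) \<Rightarrow> (nat \<Rightarrow> nat set \<times> bool) \<Rightarrow> nat \<Rightarrow> bool" where
  "consistent_at n K J c m \<longleftrightarrow>
     (\<forall>i\<in>{1..K}. tree_of (forest n c m) i \<in> block (forest n c m) ` fst (c m) \<longleftrightarrow> m \<in> J i)"

lemma consistent_at_cong:
  assumes "m \<le> n" "\<And>j. m \<le> j \<Longrightarrow> j \<le> n \<Longrightarrow> c j = c' j"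
  shows "consistent_at n K J c m = consistent_at n K J c' m"
proof -
  have "forest n c m = forest n c' m" using assms by (intro forest_cong) auto
  moreover have "c m = c' m" using assms by auto
  ultimately show ?thesis unfolding consistent_at_def by simp
qed

text \<open>If the trees of \<open>1, \<dots>, K\<close> are distinct before step \<open>m\<close>, the consistent choices of
  \<open>{a\<^sub>m, b\<^sub>m}\<close> are: the tree of the unique \<open>i\<close> with \<open>m \<in> J i\<close> together with one of the other
  \<open>m - K\<close> trees, or, if there is no such \<open>i\<close>, any two of those \<open>m - K\<close> trees.\<close>
definition step_count :: "nat \<Rightarrow> (nat \<Rightarrow> nat set) \<Rightarrow> nat \<Rightarrow> nat" where
  "step_count K J m = (if \<exists>i\<in>{1..K}. m \<in> J i then m - K else (m - K) choose 2)"

definition step_factor :: "nat \<Rightarrow> (nat \<Rightarrow> nat set) \<Rightarrow> nat \<Rightarrow> real" where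
  "step_factor K J m = real (step_count K J m) / real (m choose 2)"

locale target_sets =
  fixes n L K :: nat and J :: "nat \<Rightarrow> nat set"
  assumes K_le_L: "K \<le> L" and L_pos: "1 \<le> L" and L_le_n: "L \<le> n"
    and J_subset: "\<And>i. i \<in> {1..K} \<Longrightarrow> J i \<subseteq> {L+1..n}"
    and J_disjoint: "disjoint_family_on J {1..K}"
begin

definition consistent_upto :: "nat \<Rightarrow> (nat \<Rightarrow> nat set \<times> bool) \<Rightarrow> bool" where
  "consistent_upto d c \<longleftrightarrow>
     (\<forall>m. n - d < m \<and> m \<le> n \<longrightarrow> c m \<in> merge_choices m \<and> (L < m \<longrightarrow> consistent_at n K J c m))"

lemma consistent_upto_Suc_imp: "consistent_upto (Suc d) c \<Longrightarrow> consistent_upto d c"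
proof -
  have "n - Suc d \<le> n - d" by simp
  then show "consistent_upto (Suc d) c \<Longrightarrow> consistent_upto d c"
    unfolding consistent_upto_def by (meson le_less_trans)
qed

lemma consistent_upto_valid_merges: "consistent_upto d c \<Longrightarrow> valid_merges n d c"
  unfolding consistent_upto_def valid_merges_def merge_choices_def by (auto simp: mem_Times_iff)

lemma targets_in_distinct_trees:
  "consistent_upto d c \<Longrightarrow> d < n \<Longrightarrow> L \<le> n - d \<Longrightarrow> i \<in> {1..K} \<Longrightarrow> j \<in> {1..K} \<Longrightarrow> i \<noteq> j \<Longrightarrow>
    tree_of (coal n c d) i \<noteq> tree_of (coal n c d) j"
proof (induction d arbitrary: i j)
  case 0
  have "vertex_partition n ((\<lambda>v. {v}) ` {1..n})"
    unfolding vertex_partition_def disjoint_def by (auto simp: pairwise_def)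
  then have "tree_of ((\<lambda>v. {v}) ` {1..n}) v = {v}" if "v \<in> {1..K}" for v
    using that K_le_L L_le_n by (intro tree_of_eqI) auto
  then show ?case using "0.prems" by auto
next
  case (Suc d)
  define m where "m = n - d"
  define P where "P = coal n c d"
  have c: "consistent_upto d c" using consistent_upto_Suc_imp Suc.prems(1) by blast
  have Lm: "L < m" "m \<le> n" using Suc.prems unfolding m_def by auto
  have P: "vertex_partition n P" "card P = m"
    using vertex_partition_coal[OF _ consistent_upto_valid_merges[OF c]] Suc.prems
    unfolding P_def m_def by auto
  have cm: "c m \<in> merge_choices m" "consistent_at n K J c m"
    using Suc.prems(1) Lm unfolding consistent_upto_def m_def by auto
  have A: "fst (c m) \<subseteq> {1..card P}" "card (fst (c m)) = 2"
    using cm(1) P(2) unfolding merge_choices_def by auto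
  have "forest n c m = P" unfolding forest_def P_def m_def using Suc.prems by simp
  then have "tree_of P v \<in> block P ` fst (c m) \<longleftrightarrow> m \<in> J v" if "v \<in> {1..K}" for v
    using cm(2) that unfolding consistent_at_def by auto
  then have not_both: "\<not> (tree_of P i \<in> block P ` fst (c m) \<and> tree_of P j \<in> block P ` fst (c m))"
    using Suc.prems(4-6) disjoint_family_onD[OF J_disjoint] by blast
  have ij: "i \<in> {1..n}" "j \<in> {1..n}" using Suc.prems K_le_L L_le_n by auto
  have "d < n" "L \<le> n - d" using Suc.prems(2,3) by auto
  then have IH: "tree_of P i \<noteq> tree_of P j" using Suc.IH[OF c _ _ Suc.prems(4-6)] unfolding P_def by blast
  have "coal n c (Suc d) = merge P (fst (c m))" unfolding P_def m_def by simp
  then show ?case using tree_of_merge_neq[OF P(1) A ij IH not_both] by simp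
qed

lemma target_block_indices:
  assumes c: "consistent_upto d g" and "d < n" "L < n - d"
  obtains t where "inj_on t {1..K}" "t ` {1..K} \<subseteq> {1..n - d}"
    "\<And>y. y \<in> merge_choices (n - d) \<Longrightarrow>
       consistent_at n K J (g(n - d := y)) (n - d) \<longleftrightarrow> (\<forall>i\<in>{1..K}. t i \<in> fst y \<longleftrightarrow> n - d \<in> J i)"
proof -
  define m where "m = n - d"
  define P where "P = coal n g d"
  have P: "vertex_partition n P" "card P = m"
    using vertex_partition_coal[OF \<open>d < n\<close> consistent_upto_valid_merges[OF c]]
    unfolding P_def m_def by auto
  have forest: "forest n (g(m := y)) m = P" for y
  proof -
    have "forest n (g(m := y)) m = forest n g m" using \<open>d < n\<close> unfolding m_def by (intro forest_cong) auto
    then show ?thesis unfolding forest_def P_def m_def using \<open>d < n\<close> by simp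
  qed
  have bij: "bij_betw (block P) {1..m} P" using bij_betw_block[OF P(1)] P(2) by simp
  define t where "t i = inv_into {1..m} (block P) (tree_of P i)" for i
  have tP: "tree_of P i \<in> P" if "i \<in> {1..K}" for i
    using tree_of_in(1)[OF P(1)] that K_le_L L_le_n by auto
  have t: "t i \<in> {1..m}" "block P (t i) = tree_of P i" if "i \<in> {1..K}" for i
  proof -
    have "tree_of P i \<in> block P ` {1..m}" using tP[OF that] bij_betw_imp_surj_on[OF bij] by simp
    then show "t i \<in> {1..m}" "block P (t i) = tree_of P i"
      unfolding t_def by (rule inv_into_into, rule f_inv_into_f)
  qed
  have "inj_on t {1..K}"
  proof
    fix i j assume ij: "i \<in> {1..K}" "j \<in> {1..K}" and "t i = t j"
    then have "tree_of P i = tree_of P j" using t(2)[OF ij(1)] t(2)[OF ij(2)] by simp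
    then show "i = j"
      using targets_in_distinct_trees[OF c \<open>d < n\<close> _ ij] assms(3) unfolding P_def by fastforce
  qed
  moreover have "t ` {1..K} \<subseteq> {1..m}" using t by auto
  moreover have "consistent_at n K J (g(m := y)) m \<longleftrightarrow> (\<forall>i\<in>{1..K}. t i \<in> fst y \<longleftrightarrow> m \<in> J i)"
    if "y \<in> merge_choices m" for y
  proof -
    have y: "fst y \<subseteq> {1..m}" using that unfolding merge_choices_def by (auto simp: mem_Times_iff)
    have "tree_of P i \<in> block P ` fst y \<longleftrightarrow> t i \<in> fst y" if "i \<in> {1..K}" for i
      using inj_on_image_mem_iff[OF bij_betw_imp_inj_on[OF bij] t(1)[OF that] y] t(2)[OF that] by simp
    then show ?thesis unfolding consistent_at_def forest fun_upd_same by auto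
  qed
  ultimately show thesis using that unfolding m_def by blast
qed

definition consistent_count :: "nat \<Rightarrow> nat" where
  "consistent_count m = 2 * (if L < m then step_count K J m else m choose 2)"

lemma card_consistent_extensions:
  assumes "consistent_upto d g" "d < n"
  shows "card {y \<in> merge_choices (n - d). L < n - d \<longrightarrow> consistent_at n K J (g(n - d := y)) (n - d)}
    = consistent_count (n - d)"
proof (cases "L < n - d")
  case False
  then show ?thesis unfolding consistent_count_def using card_merge_choices by simp
next
  case True
  define m where "m = n - d"
  obtain t where t: "inj_on t {1..K}" "t ` {1..K} \<subseteq> {1..m}"
    "\<And>y. y \<in> merge_choices m \<Longrightarrow>
       consistent_at n K J (g(m := y)) m \<longleftrightarrow> (\<forall>i\<in>{1..K}. t i \<in> fst y \<longleftrightarrow> m \<in> J i)"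
    using target_block_indices[OF assms True] unfolding m_def by blast
  have "{y \<in> merge_choices m. L < m \<longrightarrow> consistent_at n K J (g(m := y)) m} =
      {A. A \<subseteq> {1..m} \<and> card A = 2 \<and> (\<forall>i\<in>{1..K}. t i \<in> A \<longleftrightarrow> m \<in> J i)} \<times> UNIV"
    using t(3) True unfolding m_def[symmetric] merge_choices_def by auto
  moreover have "card {A. A \<subseteq> {1..m} \<and> card A = 2 \<and> (\<forall>i\<in>{1..K}. t i \<in> A \<longleftrightarrow> m \<in> J i)}
      = step_count K J m"
  proof (cases "\<exists>i\<in>{1..K}. m \<in> J i")
    case True
    then obtain i0 where i0: "i0 \<in> {1..K}" "m \<in> J i0" by blast
    then have "m \<in> J i \<longleftrightarrow> i = i0" if "i \<in> {1..K}" for i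
      using that disjoint_family_onD[OF J_disjoint] by blast
    then have "(\<forall>i\<in>{1..K}. t i \<in> A \<longleftrightarrow> m \<in> J i) \<longleftrightarrow> (\<forall>i\<in>{1..K}. t i \<in> A \<longleftrightarrow> i = i0)" for A
      by auto
    then show ?thesis
      using card_2subsets_meeting_image_once[OF _ t(1,2) i0(1)] True unfolding step_count_def by simp
  next
    case False
    then show ?thesis using card_2subsets_avoiding_image[OF _ t(1,2)] unfolding step_count_def by simp
  qed
  ultimately show ?thesis unfolding m_def[symmetric] consistent_count_def
    using True by (simp add: card_cartesian_product m_def)
qed

definition consistent_histories :: "nat \<Rightarrow> (nat \<Rightarrow> nat set \<times> bool) set" where
  "consistent_histories d =
     {c \<in> PiE {n-d+1..n} merge_choices. \<forall>m\<in>{n-d+1..n}. L < m \<longrightarrow> consistent_at n K J c m}"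

lemma consistent_histories_imp_consistent_upto:
  "c \<in> consistent_histories d \<Longrightarrow> consistent_upto d c"
  unfolding consistent_histories_def consistent_upto_def by (auto simp: PiE_iff)

lemma finite_consistent_histories: "finite (consistent_histories d)"
proof (rule finite_subset)
  show "consistent_histories d \<subseteq> PiE {n-d+1..n} merge_choices"
    unfolding consistent_histories_def by blast
  show "finite (PiE {n-d+1..n} merge_choices)" by (intro finite_PiE) (auto simp: finite_merge_choices)
qed

lemma consistent_histories_Suc:
  assumes "Suc d < n"
  defines "m \<equiv> n - d"
  shows "consistent_histories (Suc d) = (\<lambda>(g, y). g(m := y)) `
    (SIGMA g:consistent_histories d. {y \<in> merge_choices m. L < m \<longrightarrow> consistent_at n K J (g(m := y)) m})"
    (is "_ = _ ` (SIGMA g:_. ?Y g)")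
proof -
  define I where "I = {n-d+1..n}"
  have I_Suc: "{n - Suc d + 1..n} = insert m I" and "m \<notin> I" and later: "\<And>j. j \<in> I \<Longrightarrow> m < j \<and> j \<le> n"
    using assms unfolding I_def m_def by auto
  have hist: "consistent_histories d = {c \<in> PiE I merge_choices. \<forall>j\<in>I. L < j \<longrightarrow> consistent_at n K J c j}"
    and hist_Suc: "consistent_histories (Suc d) =
      {c \<in> PiE (insert m I) merge_choices. \<forall>j\<in>insert m I. L < j \<longrightarrow> consistent_at n K J c j}"
    unfolding consistent_histories_def I_def I_Suc by simp_all
  have cong: "consistent_at n K J (g(m := y)) j = consistent_at n K J g j" if "j \<in> I" for g y j
    using later[OF that] by (intro consistent_at_cong) auto
  show ?thesis
  proof (intro equalityI subsetI)
    fix c assume c: "c \<in> consistent_histories (Suc d)"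
    define g where "g = c(m := undefined)"
    have "g \<in> consistent_histories d"
      using c cong[where g=c and y=undefined] \<open>m \<notin> I\<close> unfolding hist hist_Suc g_def
      by (auto simp: PiE_iff extensional_def)
    moreover have "c m \<in> ?Y g" "c = g(m := c m)"
      using c unfolding hist_Suc g_def by (auto simp: PiE_iff)
    ultimately show "c \<in> (\<lambda>(g, y). g(m := y)) ` (SIGMA g:consistent_histories d. ?Y g)"
      by (intro image_eqI[of _ _ "(g, c m)"]) auto
  next
    fix c assume "c \<in> (\<lambda>(g, y). g(m := y)) ` (SIGMA g:consistent_histories d. ?Y g)"
    then obtain g y where g: "g \<in> consistent_histories d" and y: "y \<in> ?Y g" and c: "c = g(m := y)"
      by auto
    show "c \<in> consistent_histories (Suc d)"
      using g y cong[where g=g and y=y] \<open>m \<notin> I\<close> unfolding hist hist_Suc c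
      by (auto simp: PiE_iff extensional_def)
  qed
qed

lemma card_consistent_histories_Suc:
  assumes "Suc d < n"
  shows "card (consistent_histories (Suc d)) = consistent_count (n - d) * card (consistent_histories d)"
proof -
  define m where "m = n - d"
  define Y where "Y g = {y \<in> merge_choices m. L < m \<longrightarrow> consistent_at n K J (g(m := y)) m}" for g
  have "m \<notin> {n-d+1..n}" unfolding m_def by auto
  then have "g m = undefined" if "g \<in> consistent_histories d" for g
    using that unfolding consistent_histories_def by (auto simp: PiE_iff extensional_def)
  then have "inj_on (\<lambda>(g, y). g(m := y)) (SIGMA g:consistent_histories d. Y g)"
    by (auto intro!: inj_onI simp: fun_eq_iff split: if_splits) metis
  then have "card (consistent_histories (Suc d)) = card (SIGMA g:consistent_histories d. Y g)"
    using consistent_histories_Suc[OF assms] unfolding m_def Y_def by (simp add: card_image)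
  also have "\<dots> = (\<Sum>g\<in>consistent_histories d. card (Y g))"
    using finite_consistent_histories finite_merge_choices unfolding Y_def by simp
  also have "\<dots> = consistent_count m * card (consistent_histories d)"
    using card_consistent_extensions consistent_histories_imp_consistent_upto assms
    unfolding Y_def m_def by simp
  finally show ?thesis unfolding m_def .
qed

lemma card_consistent_histories:
  "d < n \<Longrightarrow> card (consistent_histories d) = (\<Prod>j\<in>{n-d+1..n}. consistent_count j)"
proof (induction d)
  case 0
  have "consistent_histories 0 = {\<lambda>_. undefined}" unfolding consistent_histories_def by auto
  then show ?case by simp
next
  case (Suc d)
  have "{n - Suc d + 1..n} = insert (n - d) {n-d+1..n}" using Suc.prems by auto
  then have "(\<Prod>j\<in>{n - Suc d + 1..n}. consistent_count j) = consistent_count (n - d) * (\<Prod>j\<in>{n-d+1..n}. consistent_count j)"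
    by simp
  then show ?case using card_consistent_histories_Suc[OF Suc.prems] Suc by simp
qed

lemma choices_Int_target_event:
  "choices n \<inter> {c. \<forall>i\<in>{1..K}. Sset n c i - {1..L} = J i} = consistent_histories (n - 1)"
proof -
  have "{n - (n - 1) + 1..n} = {2..n}" using L_le_n L_pos by auto
  have "Sset n c i - {1..L} = J i \<longleftrightarrow>
      (\<forall>m\<in>{L+1..n}. tree_of (forest n c m) i \<in> block (forest n c m) ` fst (c m) \<longleftrightarrow> m \<in> J i)"
    if "i \<in> {1..K}" for c i
    using J_subset[OF that] L_pos unfolding Sset_def by auto
  moreover have swap: "(\<forall>i\<in>{1..K}. \<forall>m\<in>{L+1..n}. Q i m) \<longleftrightarrow> (\<forall>m\<in>{2..n}. L < m \<longrightarrow> (\<forall>i\<in>{1..K}. Q i m))"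
    for Q :: "nat \<Rightarrow> nat \<Rightarrow> bool" using L_pos by auto
  ultimately have "(\<forall>i\<in>{1..K}. Sset n c i - {1..L} = J i) \<longleftrightarrow> (\<forall>m\<in>{2..n}. L < m \<longrightarrow> consistent_at n K J c m)"
    for c unfolding consistent_at_def by (subst ball_cong[OF refl]) (assumption, rule swap)
  then show ?thesis unfolding consistent_histories_def choices_eq_PiE \<open>{n - (n - 1) + 1..n} = {2..n}\<close>
    by auto
qed

lemma prob_target_event:
  "measure_pmf.prob (coal_pmf n) {c. \<forall>i\<in>{1..K}. Sset n c i - {1..L} = J i}
     = (\<Prod>m\<in>{L+1..n}. step_factor K J m)"
proof -
  have fin: "finite (choices n)" unfolding choices_eq_PiE by (intro finite_PiE) (auto simp: finite_merge_choices)
  have "({1, 2}, True) \<in> merge_choices m" if "2 \<le> m" for m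
    using that unfolding merge_choices_def by auto
  then have "merge_choices m \<noteq> {}" if "2 \<le> m" for m using that by blast
  then have ne: "choices n \<noteq> {}" unfolding choices_eq_PiE PiE_eq_empty_iff by auto
  have "measure_pmf.prob (coal_pmf n) {c. \<forall>i\<in>{1..K}. Sset n c i - {1..L} = J i}
     = real (card (consistent_histories (n - 1))) / real (card (choices n))"
    unfolding coal_pmf_def using measure_pmf_of_set[OF ne fin] choices_Int_target_event by simp
  also have "\<dots> = (\<Prod>m\<in>{2..n}. real (consistent_count m) / real (2 * (m choose 2)))"
    using card_consistent_histories[of "n - 1"] L_pos L_le_n
    by (simp add: choices_eq_PiE card_PiE card_merge_choices prod_dividef numeral_2_eq_2)
  also have "\<dots> = (\<Prod>m\<in>{L+1..n}. step_factor K J m)"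
  proof (rule prod.mono_neutral_cong_right)
    show "\<forall>m\<in>{2..n} - {L+1..n}. real (consistent_count m) / real (2 * (m choose 2)) = 1"
      unfolding consistent_count_def by auto
    show "real (consistent_count m) / real (2 * (m choose 2)) = step_factor K J m" if "m \<in> {L+1..n}" for m
      using that unfolding consistent_count_def step_factor_def by auto
  qed (use L_pos in auto)
  finally show ?thesis .
qed

end

lemma exp_minus_double_le_one_minus:
  fixes y :: real assumes "0 \<le> y" "y \<le> 1/2" shows "exp (-(2*y)) \<le> 1 - y"
proof -
  have "exp (-(2*y)) = 1 / exp (2*y)" by (simp add: exp_minus field_simps)
  also have "\<dots> \<le> 1 / (1 + 2*y)"
    using exp_ge_add_one_self[of "2*y"] assms by (intro divide_left_mono) auto
  also have "\<dots> \<le> 1 - y"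
  proof -
    have "0 \<le> y * (1 - 2*y)" using assms by simp
    then have "1 \<le> (1 - y) * (1 + 2*y)" by (simp add: algebra_simps)
    then show ?thesis using assms by (simp add: field_simps)
  qed
  finally show ?thesis .
qed

lemma exp_sandwich_of_relative_error:
  fixes A B z :: real
  assumes "0 \<le> B" "0 \<le> z" "z \<le> 1/2" "\<bar>A - B\<bar> \<le> z * B"
  shows "exp (-(2*z)) * B \<le> A" and "A \<le> exp (2*z) * B"
proof -
  have "exp (-(2*z)) * B \<le> (1 - z) * B"
    using exp_minus_double_le_one_minus[OF assms(2,3)] assms(1) by (rule mult_right_mono)
  then show "exp (-(2*z)) * B \<le> A" using assms(4) by (simp add: algebra_simps abs_le_iff)
  have "1 + z \<le> exp (2*z)" using exp_ge_add_one_self[of "2*z"] assms(2) by linarith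
  then have "(1 + z) * B \<le> exp (2*z) * B" using assms(1) by (rule mult_right_mono)
  then show "A \<le> exp (2*z) * B" using assms(4) by (simp add: algebra_simps abs_le_iff)
qed

lemma one_minus_power_le:
  fixes a :: real assumes "0 \<le> a" "a \<le> 1"
  shows "(1 - a)^k \<le> 1 - real k * a + real k * (real k - 1) / 2 * a^2"
proof (induction k)
  case (Suc k)
  have "(1 - a)^Suc k \<le> (1 - a) * (1 - real k * a + real k * (real k - 1) / 2 * a^2)"
    using Suc.IH assms by (simp add: mult_left_mono)
  also have "\<dots> = 1 - real (Suc k) * a + real (Suc k) * (real (Suc k) - 1) / 2 * a^2
      - real k * (real k - 1) / 2 * a^3"
    unfolding power2_eq_square power3_eq_cube of_nat_Suc by (simp add: field_simps)
  also have "\<dots> \<le> 1 - real (Suc k) * a + real (Suc k) * (real (Suc k) - 1) / 2 * a^2"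
    using assms by (cases k) auto
  finally show ?case .
qed simp

text \<open>The factors at a step \<open>m \<in> J i\<close> (\<open>x = m\<close>): joint law versus product of single-vertex laws.\<close>
lemma hit_factor_bounds:
  fixes x :: real and k :: nat assumes k: "1 \<le> k" and x: "4 * real k \<le> x"
  shows "exp (-(4*real k/x)) * ((2/x)*((x-2)/x)^(k-1)) \<le> 2*(x-k)/(x*(x-1))"
    and "2*(x-k)/(x*(x-1)) \<le> exp (4*real k/x) * ((2/x)*((x-2)/x)^(k-1))"
proof -
  have x4: "4 \<le> x" using k x by (smt (verit) of_nat_1 of_nat_mono)
  define q where "q = ((x-2)/x)^(k-1)"
  have a: "(x-2)/x = 1 - 2/x" and a0: "0 \<le> 2/x" "2/x \<le> 1" using x4 by (auto simp: field_simps)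
  have q1: "q \<le> 1" unfolding q_def using x4 by (intro power_le_one) auto
  have "1 - real (k-1) * (2/x) \<le> q"
    unfolding q_def a using Bernoulli_inequality[of "-(2/x)" "k-1"] a0 by simp
  moreover have "real (k-1) * (2/x) \<le> 2*real k/x" using k x4 by (simp add: divide_right_mono)
  moreover have "exp (-(4*real k/x)) \<le> 1 - 2*real k/x"
    using exp_minus_double_le_one_minus[of "2*real k/x"] x x4 by (auto simp: field_simps)
  ultimately have e1: "exp (-(4*real k/x)) \<le> q" by linarith
  have "2*(x-k)/(x*(x-1)) \<le> 2*(x-1)/(x*(x-1))" using k x4 by (intro divide_right_mono) auto
  also have "\<dots> = 2/x" using x4 by (simp add: field_simps)
  also have "\<dots> = exp (4*real k/x) * (exp (-(4*real k/x)) * (2/x))" by (simp add: exp_minus field_simps)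
  also have "\<dots> \<le> exp (4*real k/x) * (q * (2/x))" using e1 a0 by (intro mult_left_mono mult_right_mono) auto
  finally show "2*(x-k)/(x*(x-1)) \<le> exp (4*real k/x) * ((2/x)*((x-2)/x)^(k-1))"
    unfolding q_def by (simp add: mult.commute)
  have "exp (-(4*real k/x)) \<le> exp (-(2*(real k/x)))" using x4 by (simp add: divide_right_mono)
  also have "\<dots> \<le> 1 - real k/x" using x x4 by (intro exp_minus_double_le_one_minus) (auto simp: field_simps)
  finally have e2: "exp (-(4*real k/x)) \<le> 1 - real k/x" .
  have "exp (-(4*real k/x)) * ((2/x)*q) \<le> exp (-(4*real k/x)) * (2/x)"
    using mult_left_mono[OF q1 a0(1)] by (intro mult_left_mono) auto
  also have "\<dots> \<le> (1 - real k/x) * (2/x)" using e2 a0 by (intro mult_right_mono) auto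
  also have "\<dots> = 2*(x-k)/(x*x)" using x4 by (simp add: field_simps)
  also have "\<dots> \<le> 2*(x-k)/(x*(x-1))" using x x4 by (intro divide_left_mono) auto
  finally show "exp (-(4*real k/x)) * ((2/x)*((x-2)/x)^(k-1)) \<le> 2*(x-k)/(x*(x-1))" unfolding q_def .
qed

text \<open>The factors at a step \<open>m \<notin> J i\<close> for all \<open>i\<close> (\<open>x = m\<close>).\<close>
lemma miss_factor_bounds:
  fixes x :: real and k :: nat assumes k: "1 \<le> k" and x: "4 * real k \<le> x"
  shows "exp (-(8*real k^2/x^2)) * ((x-2)/x)^k \<le> (x-k)*(x-k-1)/(x*(x-1))"
    and "(x-k)*(x-k-1)/(x*(x-1)) \<le> exp (8*real k^2/x^2) * ((x-2)/x)^k"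
proof -
  have x4: "4 \<le> x" using k x by (smt (verit) of_nat_1 of_nat_mono)
  define A where "A = (x-k)*(x-k-1)/(x*(x-1))"
  define B where "B = ((x-2)/x)^k"
  define z where "z = 4*real k^2/x^2"
  have a: "(x-2)/x = 1 - 2/x" and a0: "0 \<le> 2/x" "2/x \<le> 1" using x4 by (auto simp: field_simps)
  have B_low: "1 - 2*real k/x \<le> B"
    unfolding B_def a using Bernoulli_inequality[of "-(2/x)" k] a0 by (simp add: mult.commute)
  have B_up: "B \<le> 1 - 2*real k/x + 2*real k*(real k-1)/x^2"
  proof -
    have e: "real k*(real k - 1)/2*(2/x)^2 = 2*real k*(real k-1)/x^2" "real k*(2/x) = 2*real k/x"
      using x4 by (simp_all add: power2_eq_square field_simps)
    have "B \<le> 1 - real k*(2/x) + real k*(real k - 1)/2*(2/x)^2"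
      unfolding B_def a by (rule one_minus_power_le[OF a0])
    then show ?thesis unfolding e .
  qed
  define D where "D = real k*(real k - 1)/(x*(x-1))"
  have A_eq: "A = 1 - 2*real k/x + D" unfolding A_def D_def using x4 by (simp add: field_simps)
  have D0: "0 \<le> D" unfolding D_def using k x4 by simp
  have "D \<le> real k*(real k - 1)/(x^2/2)"
    unfolding D_def using k x4 by (intro divide_left_mono) (auto simp: power2_eq_square field_simps)
  also have "\<dots> \<le> 2*real k^2/x^2" using k by (simp add: power2_eq_square divide_right_mono)
  finally have D1: "D \<le> 2*real k^2/x^2" .
  have "2*real k*(real k-1)/x^2 \<le> 2*real k^2/x^2" using k by (intro divide_right_mono) (auto simp: power2_eq_square)
  then have diff: "\<bar>A - B\<bar> \<le> 2*real k^2/x^2" using A_eq B_low B_up D0 D1 by (simp add: abs_le_iff)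
  have "2*real k/x \<le> 1/2" using x x4 by (simp add: field_simps)
  then have B_half: "1/2 \<le> B" using B_low by linarith
  have z: "0 \<le> z" "z \<le> 1/2"
  proof -
    have "(4*real k)^2 \<le> x^2" using x by (intro power_mono) auto
    then have "16 * (real k)^2 \<le> x^2" by (simp add: power_mult_distrib)
    then have "8 * (real k)^2 \<le> x^2" using zero_le_power2[of "real k"] by linarith
    then show "0 \<le> z" "z \<le> 1/2" unfolding z_def using x4 by (auto simp: field_simps)
  qed
  have "2*real k^2/x^2 = (1/2) * z" unfolding z_def by simp
  also have "\<dots> \<le> z * B" using mult_right_mono[OF B_half z(1)] by (simp only: mult.commute)
  finally have "\<bar>A - B\<bar> \<le> z * B" using diff by linarith
  moreover have "2*z = 8*real k^2/x^2" unfolding z_def by simp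
  ultimately show "exp (-(8*real k^2/x^2)) * ((x-2)/x)^k \<le> (x-k)*(x-k-1)/(x*(x-1))"
    and "(x-k)*(x-k-1)/(x*(x-1)) \<le> exp (8*real k^2/x^2) * ((x-2)/x)^k"
    using exp_sandwich_of_relative_error[of B z A] B_half z unfolding A_def B_def by auto
qed

lemma real_choose_two: "real (m choose 2) = real m * (real m - 1) / 2"
proof (induction m)
  case (Suc m)
  have "Suc m choose 2 = m + (m choose 2)" by (simp add: numeral_2_eq_2)
  then show ?case using Suc.IH by (simp add: field_simps)
qed simp

lemma step_factor_hit:
  assumes "i0 \<in> {1..K}" "m \<in> J i0" "K \<le> m" "2 \<le> m"
  shows "step_factor K J m = 2 * (real m - real K) / (real m * (real m - 1))"
  using assms unfolding step_factor_def step_count_def by (auto simp: real_choose_two field_simps)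

lemma step_factor_miss:
  assumes "\<not> (\<exists>i\<in>{1..K}. m \<in> J i)" "K \<le> m" "2 \<le> m"
  shows "step_factor K J m = (real m - real K) * (real m - real K - 1) / (real m * (real m - 1))"
proof -
  have "real m - 1 \<noteq> 0" "real m \<noteq> 0" using assms by auto
  then show ?thesis
    using assms unfolding step_factor_def step_count_def by (auto simp: real_choose_two field_simps)
qed

lemma step_factor_single:
  assumes "2 \<le> m"
  shows "step_factor 1 (\<lambda>_. A) m = (if m \<in> A then 2 / real m else (real m - 2) / real m)"
proof -
  have "real m - 1 \<noteq> 0" "real m \<noteq> 0" using assms by auto
  then show ?thesis
    using assms unfolding step_factor_def step_count_def by (auto simp: real_choose_two field_simps)
qed

lemma prod_step_factor_single_hit:
  assumes "i0 \<in> {1..k}" "m \<in> J i0" "\<And>i. i \<in> {1..k} \<Longrightarrow> i \<noteq> i0 \<Longrightarrow> m \<notin> J i" "2 \<le> m"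
  shows "(\<Prod>i\<in>{1..k}. step_factor 1 (\<lambda>_. J i) m) = (2 / real m) * ((real m - 2) / real m)^(k-1)"
proof -
  have "(\<Prod>i\<in>{1..k}. step_factor 1 (\<lambda>_. J i) m)
      = step_factor 1 (\<lambda>_. J i0) m * (\<Prod>i\<in>{1..k}-{i0}. step_factor 1 (\<lambda>_. J i) m)"
    using assms(1) by (simp add: prod.remove)
  also have "(\<Prod>i\<in>{1..k}-{i0}. step_factor 1 (\<lambda>_. J i) m) = (\<Prod>i\<in>{1..k}-{i0}. (real m - 2) / real m)"
    using assms(3) step_factor_single[OF assms(4)] by (intro prod.cong) auto
  finally show ?thesis using assms step_factor_single[OF assms(4), of "J i0"] by simp
qed

lemma prod_step_factor_single_miss:
  assumes "\<not> (\<exists>i\<in>{1..k}. m \<in> J i)" "2 \<le> m"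
  shows "(\<Prod>i\<in>{1..k}. step_factor 1 (\<lambda>_. J i) m) = ((real m - 2) / real m)^k"
  using assms step_factor_single[OF assms(2)] by simp

definition discrepancy :: "nat \<Rightarrow> (nat \<Rightarrow> nat set) \<Rightarrow> nat \<Rightarrow> real" where
  "discrepancy k J m = (if \<exists>i\<in>{1..k}. m \<in> J i then 4*real k/real m else 8*real k^2/(real m)^2)"

lemma step_factor_vs_single_factors:
  assumes k: "1 \<le> k" and J: "disjoint_family_on J {1..k}" and m: "4 * k \<le> m"
  defines "h \<equiv> (\<Prod>i\<in>{1..k}. step_factor 1 (\<lambda>_. J i) m)"
  shows "exp (- discrepancy k J m) * h \<le> step_factor k J m \<and> step_factor k J m \<le> exp (discrepancy k J m) * h"
proof (cases "\<exists>i\<in>{1..k}. m \<in> J i")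
  case True
  then obtain i0 where i0: "i0 \<in> {1..k}" "m \<in> J i0" by blast
  have "m \<notin> J i" if "i \<in> {1..k}" "i \<noteq> i0" for i
    using disjoint_family_onD[OF J that(1) i0(1)] that(2) i0(2) by blast
  then have "h = (2 / real m) * ((real m - 2) / real m)^(k-1)"
    unfolding h_def using prod_step_factor_single_hit[of i0 k m J, OF i0] k m by auto
  moreover have "step_factor k J m = 2 * (real m - real k) / (real m * (real m - 1))"
    using step_factor_hit[of i0 k m J, OF i0] k m by auto
  ultimately show ?thesis
    using True hit_factor_bounds[OF k, of "real m"] m unfolding discrepancy_def by simp
next
  case False
  then have "h = ((real m - 2) / real m)^k"
    unfolding h_def using prod_step_factor_single_miss k m by auto
  moreover have "step_factor k J m = (real m - real k) * (real m - real k - 1) / (real m * (real m - 1))"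
    using step_factor_miss[OF False] k m by auto
  ultimately show ?thesis
    using False miss_factor_bounds[OF k, of "real m"] m unfolding discrepancy_def by simp
qed

lemma prod_exp_sandwich:
  fixes g h b :: "'a \<Rightarrow> real"
  assumes "finite M" "\<And>m. m \<in> M \<Longrightarrow> 0 \<le> h m"
    and "\<And>m. m \<in> M \<Longrightarrow> exp (- b m) * h m \<le> g m \<and> g m \<le> exp (b m) * h m"
  shows "exp (- (\<Sum>m\<in>M. b m)) * (\<Prod>m\<in>M. h m) \<le> (\<Prod>m\<in>M. g m)"
    and "(\<Prod>m\<in>M. g m) \<le> exp (\<Sum>m\<in>M. b m) * (\<Prod>m\<in>M. h m)"
proof -
  have "exp (- (\<Sum>m\<in>M. b m)) * (\<Prod>m\<in>M. h m) = (\<Prod>m\<in>M. exp (- b m) * h m)"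
    by (simp add: prod.distrib exp_sum[OF assms(1)] sum_negf[symmetric])
  also have "\<dots> \<le> (\<Prod>m\<in>M. g m)" using assms(2,3) by (intro prod_mono) auto
  finally show "exp (- (\<Sum>m\<in>M. b m)) * (\<Prod>m\<in>M. h m) \<le> (\<Prod>m\<in>M. g m)" .
  have "(\<Prod>m\<in>M. g m) \<le> (\<Prod>m\<in>M. exp (b m) * h m)"
    using assms(2,3) by (intro prod_mono conjI order_trans[OF _ conjunct1[OF assms(3)]]) auto
  also have "\<dots> = exp (\<Sum>m\<in>M. b m) * (\<Prod>m\<in>M. h m)"
    by (simp add: prod.distrib exp_sum[OF assms(1)])
  finally show "(\<Prod>m\<in>M. g m) \<le> exp (\<Sum>m\<in>M. b m) * (\<Prod>m\<in>M. h m)" .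
qed

lemma relative_error_le_of_exp_sandwich:
  fixes P R S \<epsilon> :: real
  assumes "0 < \<epsilon>" "0 \<le> R" "S \<le> ln (1 + \<epsilon>)" "exp (- S) * R \<le> P" "P \<le> exp S * R"
  shows "\<bar>P - R\<bar> \<le> \<epsilon> * R"
proof -
  have "exp S \<le> 1 + \<epsilon>" using assms(1,3) by (metis add_pos_pos exp_le_cancel_iff exp_ln zero_less_one)
  moreover have "1 - \<epsilon> \<le> exp (- S)"
  proof -
    have "1 - \<epsilon> \<le> 1 / (1 + \<epsilon>)" using assms(1) by (simp add: field_simps)
    also have "\<dots> = exp (- ln (1 + \<epsilon>))" using assms(1) by (simp add: exp_minus inverse_eq_divide)
    also have "\<dots> \<le> exp (- S)" using assms(3) by simp
    finally show ?thesis .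
  qed
  ultimately have "P \<le> (1 + \<epsilon>) * R" "(1 - \<epsilon>) * R \<le> P"
    using assms(2,4,5) by (meson mult_right_mono order_trans)+
  then show ?thesis by (simp add: abs_le_iff algebra_simps)
qed

lemma sum_inverse_squares_le:
  assumes "1 \<le> L" "L \<le> n" shows "(\<Sum>m\<in>{L+1..n}. 1 / (real m)^2) \<le> 1 / real L - 1 / real n"
  using assms(2)
proof (induction n rule: dec_induct)
  case (step n)
  have "1 / (real (Suc n))^2 \<le> 1 / (real n * real (Suc n))"
    using step assms by (intro divide_left_mono) (auto simp: power2_eq_square)
  also have "\<dots> = 1 / real n - 1 / real (Suc n)" using step assms by (simp add: field_simps)
  finally have "1 / (real (Suc n))^2 \<le> 1 / real n - 1 / real (Suc n)" .
  moreover have "{L+1..Suc n} = insert (Suc n) {L+1..n}" using step by auto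
  ultimately show ?case using step by simp
qed simp

lemma Lcut_bounds:
  assumes "2 \<le> ln (real n)"
  shows "ln (real n) \<le> real (Lcut n)" and "real (Lcut n) \<le> (ln (real n))^2"
    and "Lcut n < m \<Longrightarrow> (ln (real n))^2 < real m"
proof -
  define T where "T = ln (real n)"
  have "real (Lcut n) = real_of_int \<lfloor>T^2\<rfloor>" unfolding Lcut_def T_def by simp
  then have L: "real (Lcut n) \<le> T^2" "T^2 < real (Lcut n) + 1" by linarith+
  have "2 * 1 \<le> T * (T - 1)" using assms unfolding T_def by (intro mult_mono) auto
  then show "ln (real n) \<le> real (Lcut n)" using L(2) unfolding T_def by (simp add: algebra_simps power2_eq_square)
  show "real (Lcut n) \<le> (ln (real n))^2" using L(1) unfolding T_def .
  assume "Lcut n < m"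
  then show "(ln (real n))^2 < real m" using L(2) unfolding T_def by linarith
qed

lemma PS_eq_prod_step_factor:
  assumes "target_sets n (Lcut n) k J"
  shows "PS n k J = (\<Prod>m\<in>{Lcut n+1..n}. step_factor k J m)"
  using target_sets.prob_target_event[OF assms] unfolding PS_def Sset1_def by simp

lemma PR_eq_prod_step_factor:
  assumes "\<And>i. i \<in> {1..k} \<Longrightarrow> target_sets n (Lcut n) 1 (\<lambda>_. J i)"
  shows "PR n k J = (\<Prod>m\<in>{Lcut n+1..n}. \<Prod>i\<in>{1..k}. step_factor 1 (\<lambda>_. J i) m)"
proof -
  have "measure_pmf.prob (coal_pmf n) {c. Sset1 n c 1 = J i} = (\<Prod>m\<in>{Lcut n+1..n}. step_factor 1 (\<lambda>_. J i) m)"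
    if "i \<in> {1..k}" for i
    using target_sets.prob_target_event[OF assms[OF that]] unfolding Sset1_def by simp
  then have "PR n k J = (\<Prod>i\<in>{1..k}. \<Prod>m\<in>{Lcut n+1..n}. step_factor 1 (\<lambda>_. J i) m)"
    unfolding PR_def by simp
  also have "\<dots> = (\<Prod>m\<in>{Lcut n+1..n}. \<Prod>i\<in>{1..k}. step_factor 1 (\<lambda>_. J i) m)"
    by (rule prod.swap)
  finally show ?thesis .
qed

lemma sum_discrepancy_le:
  fixes T :: real
  assumes k: "1 \<le> k" and T: "2 \<le> T" "T \<le> real L" and "L \<le> n"
    and above: "\<And>m. L < m \<Longrightarrow> T^2 < real m"
    and J: "\<And>i. i \<in> {1..k} \<Longrightarrow> J i \<subseteq> {L+1..n}" "\<And>i. i \<in> {1..k} \<Longrightarrow> real (card (J i)) \<le> 4 * T"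
  shows "(\<Sum>m\<in>{L+1..n}. discrepancy k J m) \<le> 24 * real k^2 / T"
proof -
  define M where "M = {L+1..n}"
  define U where "U = (\<Union>i\<in>{1..k}. J i)"
  have UM: "U \<subseteq> M" unfolding U_def M_def using J(1) by blast
  have "real (card U) \<le> (\<Sum>i\<in>{1..k}. real (card (J i)))"
    unfolding U_def using card_UN_le[of "{1..k}" J] by (simp flip: of_nat_sum)
  also have "\<dots> \<le> real k * (4 * T)" using J(2) sum_mono[of "{1..k}" "\<lambda>i. real (card (J i))" "\<lambda>_. 4 * T"] by simp
  finally have card_U: "real (card U) \<le> real k * (4 * T)" .
  have "(\<Sum>m\<in>M. discrepancy k J m)
      \<le> (\<Sum>m\<in>M. (if m \<in> U then 4*real k/real m else 0) + 8*real k^2 * (1/(real m)^2))"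
    unfolding discrepancy_def U_def by (intro sum_mono) auto
  also have "\<dots> = (\<Sum>m\<in>U. 4*real k/real m) + 8*real k^2 * (\<Sum>m\<in>M. 1/(real m)^2)"
    using sum.inter_restrict[of M "\<lambda>m. 4*real k/real m" U] UM
    by (simp add: sum.distrib sum_distrib_left Int_absorb1 M_def)
  also have "(\<Sum>m\<in>U. 4*real k/real m) \<le> real (card U) * (4*real k/T^2)"
  proof (rule sum_bounded_above)
    fix m assume "m \<in> U"
    then have "T^2 < real m" using UM above unfolding M_def by auto
    moreover have "0 < T^2" using T by simp
    ultimately show "4*real k/real m \<le> 4*real k/T^2"
      using frac_le[of "4*real k" "4*real k" "T^2" "real m"] by simp
  qed
  also have "\<dots> \<le> real k * (4 * T) * (4*real k/T^2)" using card_U T by (intro mult_right_mono) auto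
  also have "(\<Sum>m\<in>M. 1/(real m)^2) \<le> 1 / T"
  proof -
    have "(\<Sum>m\<in>M. 1/(real m)^2) \<le> 1 / real L - 1 / real n"
      unfolding M_def using T \<open>L \<le> n\<close> by (intro sum_inverse_squares_le) auto
    also have "\<dots> \<le> 1 / T"
    proof -
      have "1 / real L \<le> 1 / T" using frac_le[of 1 1 T "real L"] T by simp
      moreover have "0 \<le> 1 / real n" by simp
      ultimately show ?thesis by linarith
    qed
    finally show ?thesis .
  qed
  also have "real k * (4 * T) * (4*real k/T^2) + 8*real k^2 * (1/T) = 24 * real k^2 / T"
    using T by (simp add: field_simps power2_eq_square)
  finally show ?thesis unfolding M_def by (simp add: mult_left_mono)
qed

lemma relative_error_bound:
  fixes k n :: nat and \<delta> \<epsilon> :: real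
  assumes k: "2 \<le> k" and \<delta>: "\<delta> < 2" and \<epsilon>: "0 < \<epsilon>"
    and n_large: "2 + 4*real k + 24*real k^2/ln (1+\<epsilon>) \<le> ln (real n)"
    and n_log: "ln (real n)^2 \<le> real n"
    and J: "J \<in> Bset n k \<delta>"
  shows "\<bar>PS n k J - PR n k J\<bar> \<le> \<epsilon> * PR n k J"
proof -
  define T where "T = ln (real n)"
  define L where "L = Lcut n"
  have "0 \<le> 24*real k^2/ln (1+\<epsilon>)" using \<epsilon> by simp
  then have T: "2 \<le> T" "4*real k \<le> T" "24*real k^2/ln (1+\<epsilon>) \<le> T"
    using n_large unfolding T_def by linarith+
  note L = Lcut_bounds[OF T(1)[unfolded T_def], folded T_def L_def]
  have "L \<le> n" using L(2) n_log unfolding T_def by linarith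
  have "\<delta> * T \<le> 2 * T" using \<delta> T(1) by (intro mult_right_mono) auto
  moreover have "J i \<subseteq> {L+1..n}" "\<bar>real (card (J i)) - 2 * T\<bar> \<le> \<delta> * T" if "i \<in> {1..k}" for i
    using J that unfolding Bset_def Omega1_def L_def T_def by auto
  ultimately have J_sub: "J i \<subseteq> {L+1..n}" and J_card: "real (card (J i)) \<le> 4 * T"
    if "i \<in> {1..k}" for i
    using that unfolding abs_le_iff by (blast, smt (verit))
  have J_disj: "disjoint_family_on J {1..k}"
    using J unfolding Bset_def disjoint_family_on_def by auto
  have "target_sets n L k J"
    using k L(1) T(2) \<open>L \<le> n\<close> J_sub J_disj by unfold_locales auto
  moreover have "target_sets n L 1 (\<lambda>_. J i)" if "i \<in> {1..k}" for i
    using k L(1) T(2) \<open>L \<le> n\<close> J_sub that by unfold_locales (auto simp: disjoint_family_on_def)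
  ultimately have PS: "PS n k J = (\<Prod>m\<in>{L+1..n}. step_factor k J m)"
    and PR: "PR n k J = (\<Prod>m\<in>{L+1..n}. \<Prod>i\<in>{1..k}. step_factor 1 (\<lambda>_. J i) m)"
    using PS_eq_prod_step_factor PR_eq_prod_step_factor k unfolding L_def by auto
  have "4 * k \<le> m" if "m \<in> {L+1..n}" for m using that L(1) T(2) by simp
  then have sandwich: "exp (- (\<Sum>m\<in>{L+1..n}. discrepancy k J m)) * PR n k J \<le> PS n k J"
      "PS n k J \<le> exp (\<Sum>m\<in>{L+1..n}. discrepancy k J m) * PR n k J"
    unfolding PS PR using step_factor_vs_single_factors[OF _ J_disj] k
    by (intro prod_exp_sandwich; force simp: step_factor_def intro: prod_nonneg)+
  have "(\<Sum>m\<in>{L+1..n}. discrepancy k J m) \<le> 24 * real k^2 / T"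
    using k T L(1,3) \<open>L \<le> n\<close> J_sub J_card by (intro sum_discrepancy_le) auto
  also have "\<dots> \<le> ln (1 + \<epsilon>)" using T(1,3) \<epsilon> by (simp add: field_simps)
  finally show ?thesis
    using relative_error_le_of_exp_sandwich[OF \<epsilon> _ _ sandwich] unfolding PR
    by (simp add: prod_nonneg step_factor_def)
qed

theorem proposition4p5:
  fixes k :: nat and \<delta> :: real
  assumes "k \<ge> 2" and "0 < \<delta>" and "\<delta> < 2"
  shows "\<forall>\<epsilon>>0. eventually (\<lambda>n. \<forall>J\<in>Bset n k \<delta>.
            \<bar>PS n k J - PR n k J\<bar> \<le> \<epsilon> * PR n k J) sequentially"
proof (intro allI impI)
  fix \<epsilon> :: real assume "\<epsilon> > 0"
  define C where "C = 2 + 4*real k + 24*real k^2/ln (1+\<epsilon>)"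
  have "eventually (\<lambda>n. exp C \<le> real n) sequentially"
    using eventually_ge_at_top[of "nat \<lceil>exp C\<rceil>"] by (rule eventually_mono) linarith
  then have "eventually (\<lambda>n. C \<le> ln (real n)) sequentially"
    by (rule eventually_mono) (metis exp_gt_zero ln_exp ln_le_cancel_iff order_less_le_trans)
  moreover have "eventually (\<lambda>n::nat. ln (real n)^2 \<le> real n) sequentially" by real_asymp
  ultimately show "eventually (\<lambda>n. \<forall>J\<in>Bset n k \<delta>. \<bar>PS n k J - PR n k J\<bar> \<le> \<epsilon> * PR n k J) sequentially"
    by eventually_elim (use relative_error_bound[OF assms(1,3) \<open>\<epsilon> > 0\<close>] in \<open>auto simp: C_def\<close>)
qed

end
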